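(* In the known-variance setup, let $a>2$ and $p'_g(r)=\frac{\Gamma(\frac{a+K}{2}-1)}{\Gamma(K/2)}\frac{a-2}{r}\big(\frac{Nr^2}{2}\big)^{K/2}U\big(\frac{a+K-2}{2};\frac K2;\frac{Nr^2}{2}\big)$ for $r>0$. Then $$\int_0^\infty p(\mathbf y\mid r)\,p'_g(r)\,dr=C_\sigma\,e^{-N\langle\mathbf z^2\rangle/2}\,\frac{a-2}{K+a-2}\;{}_1F_1\!\left(1;\frac{K+a}{2};\frac{N\hat b^2}{2}\right).$$
   Context: Known-variance setup: known $\sigma_1,\dots,\sigma_N>0$; $z_n=y_n/\sigma_n$; $\mathbb X\in\mathbb R^{N\times K}$ with entries $X_k(c_n)/\sigma_n$, full column rank. $\langle\mathbf z^2\rangle=\mathbf z^T\mathbf z/N$, $\mathbb H=\mathbb X^T\mathbb X/N=\mathbb S\mathbb L\mathbb S^T$, $\mathbf h=\mathbb X^T\mathbf z/N$, $\hat{\mathbf b}=\mathbb L^{1/2}\mathbb S^T\mathbb H^{-1}\mathbf h$, $\hat b^2=\|\hat{\mathbf b}\|^2$, $C_\sigma=\prod_n(2\pi\sigma_n^2)^{-1/2}$. Likelihood $p(\mathbf y\mid\mathbf b)=C_\sigma\exp[-\tfrac N2(\langle\mathbf z^2\rangle+\|\mathbf b\|^2-2\hat{\mathbf b}^T\mathbf b)]$; $p(\mathbf y\mid r)=\int p(\mathbf y\mid\mathbf b)d\mu_r(\mathbf b)$ with $\mu_r$ the uniform probability measure on the radius-$r$ sphere of $\mathbb R^K$. $U$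 is Tricomi's function; ${}_1F_1$ is Kummer's function. *)

theory Defs
  imports "HOL-Analysis.Analysis"
begin

definition kummer1F1 :: "real \<Rightarrow> real \<Rightarrow> real \<Rightarrow> real" where
  "kummer1F1 a b x = (\<Sum>n. pochhammer a n / pochhammer b n * x ^ n / fact n)"

text \<open>Tricomi's confluent hypergeometric function U(a;b;z), via its standard integral
  representation (valid for a > 0, z > 0, which is the range used below).\<close>
definition tricomiU :: "real \<Rightarrow> real \<Rightarrow> real \<Rightarrow> real" where
  "tricomiU a b z =
     (LBINT t:{0<..}. exp (- z * t) * t powr (a - 1) * (1 + t) powr (b - a - 1)) / Gamma a"

text \<open>Uniform probability measure on the sphere of radius r in a Euclidean space:
  image of the uniform measure on the unit ball under x \<mapsto> r x/|x| (cone measure).\<close>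
definition sphere_measure :: "real \<Rightarrow> 'a::euclidean_space measure" where
  "sphere_measure r = distr (uniform_measure lborel (ball 0 1)) borel (\<lambda>x. r *\<^sub>R sgn x)"

definition scaledX :: "real^'n \<Rightarrow> real^'k^'n \<Rightarrow> real^'k^'n" where
  "scaledX \<sigma> Xr = (\<chi> n k. Xr $ n $ k / \<sigma> $ n)"

definition scaledz :: "real^'n \<Rightarrow> real^'n \<Rightarrow> real^'n" where
  "scaledz \<sigma> y = (\<chi> n. y $ n / \<sigma> $ n)"

definition Hmat :: "real^'n \<Rightarrow> real^'k^'n \<Rightarrow> real^'k^'k" where
  "Hmat \<sigma> Xr = (1 / real CARD('n)) *\<^sub>R (transpose (scaledX \<sigma> Xr) ** scaledX \<sigma> Xr)"

definition hvec :: "real^'n \<Rightarrow> real^'n \<Rightarrow> real^'k^'n \<Rightarrow> real^'k" where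
  "hvec \<sigma> y Xr = (1 / real CARD('n)) *\<^sub>R (transpose (scaledX \<sigma> Xr) *v scaledz \<sigma> y)"

definition zsq_mean :: "real^'n \<Rightarrow> real^'n \<Rightarrow> real" where
  "zsq_mean \<sigma> y = (scaledz \<sigma> y \<bullet> scaledz \<sigma> y) / real CARD('n)"

definition diagm :: "real^'k \<Rightarrow> real^'k^'k" where
  "diagm l = (\<chi> i j. if i = j then l $ i else 0)"

definition bhat :: "real^'n \<Rightarrow> real^'n \<Rightarrow> real^'k^'n \<Rightarrow> real^'k^'k \<Rightarrow> real^'k \<Rightarrow> real^'k" where
  "bhat \<sigma> y Xr S l =
     (diagm (\<chi> i. sqrt (l $ i)) ** transpose S) *v (matrix_inv (Hmat \<sigma> Xr) *v hvec \<sigma> y Xr)"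

definition Csigma :: "real^'n \<Rightarrow> real" where
  "Csigma \<sigma> = (\<Prod>n\<in>UNIV. (2 * pi * (\<sigma> $ n)\<^sup>2) powr (- 1 / 2))"

definition lik :: "real^'n \<Rightarrow> real^'n \<Rightarrow> real^'k^'n \<Rightarrow> real^'k^'k \<Rightarrow> real^'k \<Rightarrow> real^'k \<Rightarrow> real" where
  "lik \<sigma> y Xr S l b = Csigma \<sigma> * exp (- (real CARD('n) / 2) *
     (zsq_mean \<sigma> y + (norm b)\<^sup>2 - 2 * (bhat \<sigma> y Xr S l \<bullet> b)))"

definition lik_r :: "real^'n \<Rightarrow> real^'n \<Rightarrow> real^'k^'n \<Rightarrow> real^'k^'k \<Rightarrow> real^'k \<Rightarrow> real \<Rightarrow> real" where
  "lik_r \<sigma> y Xr S l r = (\<integral>b. lik \<sigma> y Xr S l b \<partial>(sphere_measure r))"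

definition pg' :: "real \<Rightarrow> nat \<Rightarrow> nat \<Rightarrow> real \<Rightarrow> real" where
  "pg' a K N r = Gamma ((a + real K) / 2 - 1) / Gamma (real K / 2) * ((a - 2) / r)
     * (real N * r\<^sup>2 / 2) powr (real K / 2)
     * tricomiU ((a + real K - 2) / 2) (real K / 2) (real N * r\<^sup>2 / 2)"

end

theory Submission
  imports Defs
begin

(* The prior is a Gaussian scale mixture: reading the integral representation of Tricomi's U
   backwards, p'_g(r) is proportional to
     r^(K-1) * \<integral>\<^sub>0\<^sup>\<infinity> t^((a+K)/2-2) (1+t)^(-a/2) exp (- N t r^2 / 2) dt.
   Exchanging the r- and t-integrals, the spherical average of the likelihood against
   r^(K-1) dr reassembles, in polar coordinates, a Gaussian integral over R^K, which for fixed t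
   is proportional to (1+t)^(-K/2) exp (N |bhat|^2 / (2 (1+t))). Expanding this exponential, each term
   is a Beta integral of the second kind, and the resulting series is Kummer's 1F1(1; (K+a)/2; .). *)

section \<open>Polar coordinates\<close>

declare borel_open[OF open_ball, measurable]

lemma lborel_nn_integral_swap:
  fixes f :: "'a::euclidean_space \<Rightarrow> 'b::euclidean_space \<Rightarrow> ennreal"
  assumes "(\<lambda>(x, y). f x y) \<in> borel_measurable (borel \<Otimes>\<^sub>M borel)"
  shows "(\<integral>\<^sup>+x. \<integral>\<^sup>+y. f x y \<partial>lborel \<partial>lborel) = (\<integral>\<^sup>+y. \<integral>\<^sup>+x. f x y \<partial>lborel \<partial>lborel)"
  using assms lborel_pair.Fubini'[of f]
  by (simp add: measurable_cong_sets[OF sets_pair_measure_cong[OF sets_lborel sets_lborel] refl])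

lemma nn_integral_lborel_affine:
  fixes t :: "'a::euclidean_space"
  assumes [measurable]: "f \<in> borel_measurable borel" and c: "c \<noteq> 0"
  shows "(\<integral>\<^sup>+x. f x \<partial>lborel) = ennreal (\<bar>c\<bar> ^ DIM('a)) * (\<integral>\<^sup>+x. f (t + c *\<^sub>R x) \<partial>lborel)"
  by (subst lborel_affine[OF c, of t])
     (simp add: nn_integral_density nn_integral_distr nn_integral_cmult)

lemma nn_integral_powr_tail:
  assumes "b > 0" "q > 0"
  shows "(\<integral>\<^sup>+\<sigma>. indicator {b<..} \<sigma> * ennreal (q * \<sigma> powr (-q-1)) \<partial>lborel) = ennreal (b powr (-q))"
proof -
  have "(\<integral>\<^sup>+\<sigma>. indicator {b<..} \<sigma> * ennreal (q * \<sigma> powr (-q-1)) \<partial>lborel) =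
        (\<integral>\<^sup>+\<sigma>. ennreal (q * \<sigma> powr (-q-1)) * indicator {b..} \<sigma> \<partial>lborel)"
    by (intro nn_integral_cong_AE eventually_mono[OF AE_lborel_singleton[of b]]) (auto simp: indicator_def)
  also have "\<dots> = ennreal (0 - (- (b powr (-q))))"
  proof (rule nn_integral_FTC_atLeast)
    show "\<And>x. b \<le> x \<Longrightarrow> ((\<lambda>x. - (x powr (-q))) has_real_derivative q * x powr (- q - 1)) (at x)"
      using assms by (auto intro!: derivative_eq_intros simp: field_simps)
    show "\<And>x. b \<le> x \<Longrightarrow> 0 \<le> q * x powr (- q - 1)" using assms by auto
    have "((\<lambda>x. x powr (-q)) \<longlongrightarrow> 0) at_top" using assms
      by (intro tendsto_neg_powr) (auto intro: filterlim_ident)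
    then show "((\<lambda>x. - (x powr (-q))) \<longlongrightarrow> 0) at_top"
      using tendsto_minus by fastforce
  qed measurable
  finally show ?thesis by simp
qed

lemma nn_integral_radial_rescale:
  fixes F :: "'a::euclidean_space \<Rightarrow> ennreal" and x :: 'a
  assumes [measurable]: "F \<in> borel_measurable borel" and p: "p > 0" and x: "x \<noteq> 0"
  defines "q \<equiv> real DIM('a) / p"
  shows "(\<integral>\<^sup>+\<rho>. indicator {0<..} \<rho> * ennreal (q * \<rho> powr (q - 1)) * F (\<rho> powr (1/p) *\<^sub>R sgn x) \<partial>lborel)
    = ennreal (norm x powr real DIM('a)) * (\<integral>\<^sup>+\<sigma>. indicator {0<..} \<sigma> * ennreal (q * \<sigma> powr (q - 1)) * F (\<sigma> powr (1/p) *\<^sub>R x) \<partial>lborel)"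
proof -
  define c where "c = norm x powr p"
  have c: "c > 0" using x by (simp add: c_def)
  have q: "q > 0" using p by (simp add: q_def)
  let ?f = "\<lambda>\<rho>. indicator {0<..} \<rho> * ennreal (q * \<rho> powr (q - 1)) * F (\<rho> powr (1/p) *\<^sub>R sgn x)"
  have "(\<integral>\<^sup>+\<rho>. ?f \<rho> \<partial>lborel) = ennreal \<bar>c\<bar> * (\<integral>\<^sup>+\<sigma>. ?f (0 + c * \<sigma>) \<partial>lborel)"
    by (rule nn_integral_real_affine) (use c in auto)
  also have "\<dots> = (\<integral>\<^sup>+\<sigma>. ennreal c * ?f (c * \<sigma>) \<partial>lborel)"
    using c by (subst nn_integral_cmult) auto
  also have "\<dots> = (\<integral>\<^sup>+\<sigma>. ennreal (norm x powr real DIM('a)) * (indicator {0<..} \<sigma> * ennreal (q * \<sigma> powr (q - 1)) * F (\<sigma> powr (1/p) *\<^sub>R x)) \<partial>lborel)"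
  proof (intro nn_integral_cong)
    fix \<sigma> :: real
    show "ennreal c * ?f (c * \<sigma>) = ennreal (norm x powr real DIM('a)) * (indicator {0<..} \<sigma> * ennreal (q * \<sigma> powr (q - 1)) * F (\<sigma> powr (1/p) *\<^sub>R x))"
    proof (cases "\<sigma> > 0")
      case True
      have e1: "(c * \<sigma>) powr (1/p) *\<^sub>R sgn x = \<sigma> powr (1/p) *\<^sub>R x"
        using True c p x by (simp add: c_def powr_mult powr_powr sgn_div_norm)
      have e2: "c * (q * (c * \<sigma>) powr (q - 1)) = norm x powr real DIM('a) * (q * \<sigma> powr (q - 1))"
      proof -
        have "(c * \<sigma>) powr (q - 1) = c powr (q - 1) * \<sigma> powr (q - 1)"
          using True c by (simp add: powr_mult)
        moreover have "c * c powr (q - 1) = c powr q" using c by (simp add: powr_diff)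
        ultimately have "c * (c * \<sigma>) powr (q - 1) = c powr q * \<sigma> powr (q - 1)"
          by (metis mult.assoc)
        moreover have "c powr q = norm x powr real DIM('a)"
          using p by (simp add: c_def powr_powr q_def)
        ultimately show ?thesis by (simp add: algebra_simps)
      qed
      have "ennreal c * ?f (c * \<sigma>) = ennreal (c * (q * (c * \<sigma>) powr (q - 1))) * F (\<sigma> powr (1/p) *\<^sub>R x)"
        using True c q e1 by (simp add: ennreal_mult' mult.assoc)
      also have "\<dots> = ennreal (norm x powr real DIM('a)) * (indicator {0<..} \<sigma> * ennreal (q * \<sigma> powr (q - 1)) * F (\<sigma> powr (1/p) *\<^sub>R x))"
        using True q by (simp add: e2 ennreal_mult' mult.assoc)
      finally show ?thesis .
    next
      case False
      then have "\<not> c * \<sigma> > 0" using c by (simp add: zero_less_mult_iff)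
      with False show ?thesis by simp
    qed
  qed
  also have "\<dots> = ennreal (norm x powr real DIM('a)) * (\<integral>\<^sup>+\<sigma>. indicator {0<..} \<sigma> * ennreal (q * \<sigma> powr (q - 1)) * F (\<sigma> powr (1/p) *\<^sub>R x) \<partial>lborel)"
    by (subst nn_integral_cmult) auto
  finally show ?thesis .
qed

lemma nn_integral_ball_dilate:
  fixes F :: "'a::euclidean_space \<Rightarrow> ennreal"
  assumes [measurable]: "F \<in> borel_measurable borel" and p: "p > 0" and \<sigma>: "\<sigma> > 0"
  defines "q \<equiv> real DIM('a) / p"
  shows "(\<integral>\<^sup>+x. indicator (ball 0 1) x * ennreal (norm x powr DIM('a)) * F (\<sigma> powr (1/p) *\<^sub>R x) \<partial>lborel)
    = ennreal (\<sigma> powr (-2*q)) * (\<integral>\<^sup>+y. indicator {y. norm y powr p < \<sigma>} y * ennreal (norm y powr DIM('a)) * F y \<partial>lborel)"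
proof -
  define s where "s = \<sigma> powr (1/p)"
  have s: "s > 0" using \<sigma> by (simp add: s_def)
  have ball_iff: "(1/s) *\<^sub>R y \<in> ball 0 1 \<longleftrightarrow> norm y powr p < \<sigma>" for y :: 'a
  proof -
    have "(1/s) *\<^sub>R y \<in> ball 0 1 \<longleftrightarrow> norm y < s" using s by (simp add: field_simps)
    also have "\<dots> \<longleftrightarrow> norm y powr p < s powr p"
      using s p by (meson powr_less_mono2 powr_mono2 not_less less_imp_le norm_ge_zero)
    also have "s powr p = \<sigma>" using p \<sigma> by (simp add: s_def powr_powr)
    finally show ?thesis .
  qed
  have scale: "\<bar>1/s\<bar> ^ DIM('a) * norm ((1/s) *\<^sub>R y) powr DIM('a) = \<sigma> powr (-2*q) * norm y powr DIM('a)"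
    for y :: 'a
    using s \<sigma> p
    by (simp add: powr_realpow[symmetric] powr_divide powr_powr s_def q_def powr_add[symmetric]
        powr_minus_divide)
  have "(\<integral>\<^sup>+x. indicator (ball 0 1) x * ennreal (norm x powr DIM('a)) * F (s *\<^sub>R x) \<partial>lborel)
      = ennreal (\<bar>1/s\<bar> ^ DIM('a)) * (\<integral>\<^sup>+y. indicator (ball 0 1) ((1/s) *\<^sub>R y) *
          ennreal (norm ((1/s) *\<^sub>R y) powr DIM('a)) * F y \<partial>lborel)"
    using s by (subst nn_integral_lborel_affine[of _ "1/s" 0]) auto
  also have "\<dots> = (\<integral>\<^sup>+y. ennreal (\<sigma> powr (-2*q)) *
      (indicator {y. norm y powr p < \<sigma>} y * ennreal (norm y powr DIM('a)) * F y) \<partial>lborel)"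
  proof (subst nn_integral_cmult[symmetric], measurable, intro nn_integral_cong)
    fix y :: 'a
    have "ennreal (\<bar>1/s\<bar> ^ DIM('a)) * ennreal (norm ((1/s) *\<^sub>R y) powr DIM('a))
        = ennreal (\<sigma> powr (-2*q)) * ennreal (norm y powr DIM('a))"
      using arg_cong[OF scale[of y], of ennreal] by (simp add: ennreal_mult)
    then show "ennreal (\<bar>1/s\<bar> ^ DIM('a)) * (indicator (ball 0 1) ((1/s) *\<^sub>R y) *
          ennreal (norm ((1/s) *\<^sub>R y) powr DIM('a)) * F y)
        = ennreal (\<sigma> powr (-2*q)) * (indicator {y. norm y powr p < \<sigma>} y * ennreal (norm y powr DIM('a)) * F y)"
      unfolding indicator_def ball_iff by (simp add: ac_simps)
  qed
  finally show ?thesis by (subst (asm) nn_integral_cmult) (auto simp: s_def)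
qed

lemma pred_mem_greaterThan[measurable (raw)]:
  fixes f g :: "'a \<Rightarrow> real"
  assumes [measurable]: "f \<in> borel_measurable M" "g \<in> borel_measurable M"
  shows "Measurable.pred M (\<lambda>x. f x \<in> {g x<..})"
  by simp

lemma nn_integral_polar_powr_eq_ball_dilations:
  fixes F :: "'a::euclidean_space \<Rightarrow> ennreal"
  assumes Fm[measurable]: "F \<in> borel_measurable borel" and p: "p > 0"
  defines "q \<equiv> real DIM('a) / p"
  shows "(\<integral>\<^sup>+\<rho>. indicator {0<..} \<rho> * ennreal (q * \<rho> powr (q - 1)) *
            (\<integral>\<^sup>+x. indicator (ball 0 1) x * F (\<rho> powr (1/p) *\<^sub>R sgn x) \<partial>lborel) \<partial>lborel)
    = (\<integral>\<^sup>+\<sigma>. indicator {0<..} \<sigma> * ennreal (q * \<sigma> powr (q - 1)) *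
            (\<integral>\<^sup>+x. indicator (ball 0 1) x * ennreal (norm x powr DIM('a)) * F (\<sigma> powr (1/p) *\<^sub>R x) \<partial>lborel) \<partial>lborel)"
    (is "?L = ?R")
proof -
  let ?k = "\<lambda>\<rho>::real. indicator {0<..} \<rho> * ennreal (q * \<rho> powr (q - 1))"
  have "?L = (\<integral>\<^sup>+\<rho>. \<integral>\<^sup>+x. ?k \<rho> * (indicator (ball 0 1) x * F (\<rho> powr (1/p) *\<^sub>R sgn x)) \<partial>lborel \<partial>lborel)"
    by (intro nn_integral_cong nn_integral_cmult[symmetric]) measurable
  also have "\<dots> = (\<integral>\<^sup>+x. \<integral>\<^sup>+\<rho>. indicator (ball 0 1) x * (?k \<rho> * F (\<rho> powr (1/p) *\<^sub>R sgn x)) \<partial>lborel \<partial>lborel)"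
    by (subst lborel_nn_integral_swap) (measurable, simp only: mult_ac)
  also have "\<dots> = (\<integral>\<^sup>+x. indicator (ball 0 1) x * (\<integral>\<^sup>+\<rho>. ?k \<rho> * F (\<rho> powr (1/p) *\<^sub>R sgn x) \<partial>lborel) \<partial>lborel)"
    by (intro nn_integral_cong nn_integral_cmult) measurable
  also have "\<dots> = (\<integral>\<^sup>+x. indicator (ball 0 1) x * (ennreal (norm x powr DIM('a)) *
            (\<integral>\<^sup>+\<sigma>. ?k \<sigma> * F (\<sigma> powr (1/p) *\<^sub>R x) \<partial>lborel)) \<partial>lborel)"
    by (intro nn_integral_cong_AE eventually_mono[OF AE_lborel_singleton[of 0]])
       (simp add: nn_integral_radial_rescale[OF Fm p, folded q_def])
  also have "\<dots> = (\<integral>\<^sup>+x. \<integral>\<^sup>+\<sigma>. ?k \<sigma> * (indicator (ball 0 1) x * ennreal (norm x powr DIM('a)) *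
            F (\<sigma> powr (1/p) *\<^sub>R x)) \<partial>lborel \<partial>lborel)"
    by (intro nn_integral_cong, simp only: mult.assoc[symmetric], subst nn_integral_cmult[symmetric])
       (measurable, simp only: ac_simps)
  also have "\<dots> = ?R"
    by (subst lborel_nn_integral_swap) (measurable, intro nn_integral_cong nn_integral_cmult, measurable)
  finally show ?thesis .
qed

lemma nn_integral_ball_dilations_eq_lborel:
  fixes F :: "'a::euclidean_space \<Rightarrow> ennreal"
  assumes Fm[measurable]: "F \<in> borel_measurable borel" and p: "p > 0"
  defines "q \<equiv> real DIM('a) / p"
  shows "(\<integral>\<^sup>+\<sigma>. indicator {0<..} \<sigma> * ennreal (q * \<sigma> powr (q - 1)) *
            (\<integral>\<^sup>+x. indicator (ball 0 1) x * ennreal (norm x powr DIM('a)) * F (\<sigma> powr (1/p) *\<^sub>R x) \<partial>lborel) \<partial>lborel)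
    = (\<integral>\<^sup>+y. F y \<partial>lborel)"
    (is "?L = _")
proof -
  have q: "q > 0" using p by (simp add: q_def)
  let ?k = "\<lambda>y::'a. \<lambda>\<sigma>::real. indicator {norm y powr p<..} \<sigma> * ennreal (q * \<sigma> powr (-q-1))"
  let ?w = "\<lambda>y::'a. ennreal (norm y powr DIM('a)) * F y"
  have "?L = (\<integral>\<^sup>+\<sigma>. \<integral>\<^sup>+y. ?k y \<sigma> * ?w y \<partial>lborel \<partial>lborel)"
  proof (intro nn_integral_cong)
    fix \<sigma> :: real
    show "indicator {0<..} \<sigma> * ennreal (q * \<sigma> powr (q - 1)) *
            (\<integral>\<^sup>+x. indicator (ball 0 1) x * ennreal (norm x powr DIM('a)) * F (\<sigma> powr (1/p) *\<^sub>R x) \<partial>lborel)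
          = (\<integral>\<^sup>+y. ?k y \<sigma> * ?w y \<partial>lborel)"
    proof (cases "\<sigma> > 0")
      case True
      have e: "q * \<sigma> powr (q - 1) * \<sigma> powr (- (2*q)) = q * \<sigma> powr (-q-1)"
        using True by (simp add: mult.assoc powr_add[symmetric])
      have "indicator {0<..} \<sigma> * ennreal (q * \<sigma> powr (q - 1)) *
            (\<integral>\<^sup>+x. indicator (ball 0 1) x * ennreal (norm x powr DIM('a)) * F (\<sigma> powr (1/p) *\<^sub>R x) \<partial>lborel)
          = ennreal (q * \<sigma> powr (-q-1)) * (\<integral>\<^sup>+y. indicator {y. norm y powr p < \<sigma>} y * ?w y \<partial>lborel)"
        using True q by (simp add: nn_integral_ball_dilate[OF Fm p True, folded q_def] mult.assoc[symmetric]
            ennreal_mult'[symmetric] e)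
      also have "\<dots> = (\<integral>\<^sup>+y. ?k y \<sigma> * ?w y \<partial>lborel)"
        by (subst nn_integral_cmult[symmetric]) (measurable, intro nn_integral_cong, simp add: indicator_def mult_ac)
      finally show ?thesis .
    next
      case False
      then have "\<not> norm y powr p < \<sigma>" for y :: 'a by (meson le_less_trans not_le powr_ge_zero)
      with False show ?thesis by (simp add: indicator_def)
    qed
  qed
  also have "\<dots> = (\<integral>\<^sup>+y. (\<integral>\<^sup>+\<sigma>. ?k y \<sigma> \<partial>lborel) * ?w y \<partial>lborel)"
    by (subst lborel_nn_integral_swap) (measurable, intro nn_integral_cong nn_integral_multc, measurable)
  also have "\<dots> = (\<integral>\<^sup>+y. F y \<partial>lborel)"
  proof (intro nn_integral_cong_AE eventually_mono[OF AE_lborel_singleton[of 0]])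
    fix y :: 'a assume y: "y \<noteq> 0"
    have b: "norm y powr p > 0" using y by simp
    have e: "(norm y powr p) powr (-q) * norm y powr DIM('a) = 1"
      using y p by (simp add: powr_powr q_def powr_add[symmetric])
    show "(\<integral>\<^sup>+\<sigma>. ?k y \<sigma> \<partial>lborel) * ?w y = F y"
      by (simp add: nn_integral_powr_tail[OF b q] mult.assoc[symmetric] ennreal_mult'[symmetric] e)
  qed
  finally show ?thesis .
qed

(* Polar coordinates in the radial variable norm y powr p: both sides are the integral over
   dilates of the unit ball appearing in the two lemmas above. *)
lemma nn_integral_lborel_polar_powr:
  fixes F :: "'a::euclidean_space \<Rightarrow> ennreal"
  assumes "F \<in> borel_measurable borel" and "p > 0"
  defines "q \<equiv> real DIM('a) / p"
  shows "(\<integral>\<^sup>+y. F y \<partial>lborel) = (\<integral>\<^sup>+\<rho>. indicator {0<..} \<rho> * ennreal (q * \<rho> powr (q - 1)) *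
            (\<integral>\<^sup>+x. indicator (ball 0 1) x * F (\<rho> powr (1/p) *\<^sub>R sgn x) \<partial>lborel) \<partial>lborel)"
  unfolding q_def
  by (simp only: nn_integral_polar_powr_eq_ball_dilations[OF assms(1,2)] nn_integral_ball_dilations_eq_lborel[OF assms(1,2)])

lemma nn_integral_lborel_polar:
  fixes F :: "'a::euclidean_space \<Rightarrow> ennreal"
  assumes "F \<in> borel_measurable borel"
  shows "(\<integral>\<^sup>+y. F y \<partial>lborel) = (\<integral>\<^sup>+\<rho>. indicator {0<..} \<rho> * ennreal (real DIM('a) * \<rho> powr (real DIM('a) - 1)) *
            (\<integral>\<^sup>+x. indicator (ball 0 1) x * F (\<rho> *\<^sub>R sgn x) \<partial>lborel) \<partial>lborel)"
  unfolding nn_integral_lborel_polar_powr[OF assms, of 1, simplified]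
  by (intro nn_integral_cong) (auto simp: indicator_def)

section \<open>Gaussian integrals\<close>

lemma nn_integral_exp_neg_norm_sq:
  "(\<integral>\<^sup>+y. ennreal (exp (- (norm (y::'a::euclidean_space) ^ 2))) \<partial>lborel) = ennreal (pi powr (DIM('a) / 2))"
proof -
  define q where "q = real DIM('a) / 2"
  define V where "V = unit_ball_vol (real DIM('a))"
  have q: "q > 0" by (simp add: q_def)
  have V: "V > 0" by (simp add: V_def)
  have "(\<integral>\<^sup>+y. ennreal (exp (- (norm (y::'a) ^ 2))) \<partial>lborel) =
     (\<integral>\<^sup>+\<rho>. indicator {0<..} \<rho> * ennreal (q * \<rho> powr (q - 1)) *
            (\<integral>\<^sup>+x. indicator (ball 0 1) x * ennreal (exp (- (norm (\<rho> powr (1/2) *\<^sub>R sgn (x::'a)) ^ 2))) \<partial>lborel) \<partial>lborel)"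
    using nn_integral_lborel_polar_powr[of "\<lambda>y::'a. ennreal (exp (- (norm y ^ 2)))" 2] unfolding q_def by simp
  also have "\<dots> = (\<integral>\<^sup>+\<rho>. ennreal (q * V) * ennreal (indicator {0..} \<rho> * \<rho> powr (q - 1) / exp \<rho>) \<partial>lborel)"
  proof (intro nn_integral_cong_AE eventually_mono[OF AE_lborel_singleton[of 0]])
    fix \<rho> :: real assume "\<rho> \<noteq> 0"
    show "indicator {0<..} \<rho> * ennreal (q * \<rho> powr (q - 1)) *
            (\<integral>\<^sup>+x. indicator (ball 0 1) x * ennreal (exp (- (norm (\<rho> powr (1/2) *\<^sub>R sgn (x::'a)) ^ 2))) \<partial>lborel)
        = ennreal (q * V) * ennreal (indicator {0..} \<rho> * \<rho> powr (q - 1) / exp \<rho>)"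
    proof (cases "\<rho> > 0")
      case True
      have "(\<integral>\<^sup>+x. indicator (ball 0 1) x * ennreal (exp (- (norm (\<rho> powr (1/2) *\<^sub>R sgn (x::'a)) ^ 2))) \<partial>lborel)
          = (\<integral>\<^sup>+x. ennreal (exp (- \<rho>)) * indicator (ball 0 1) (x::'a) \<partial>lborel)"
      proof (intro nn_integral_cong_AE eventually_mono[OF AE_lborel_singleton[of 0]])
        fix x :: 'a assume "x \<noteq> 0"
        then have "norm (\<rho> powr (1/2) *\<^sub>R sgn x) ^ 2 = \<rho>"
          using True by (simp add: norm_sgn powr_half_sqrt)
        then show "indicator (ball 0 1) x * ennreal (exp (- (norm (\<rho> powr (1/2) *\<^sub>R sgn x) ^ 2))) = ennreal (exp (- \<rho>)) * indicator (ball 0 1) x"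
          by (simp add: mult.commute)
      qed
      also have "\<dots> = ennreal (exp (- \<rho>) * V)"
        by (simp add: nn_integral_cmult_indicator emeasure_ball V_def ennreal_mult)
      finally show ?thesis using True q V
        by (simp add: ennreal_mult'[symmetric] exp_minus field_simps)
    qed (use \<open>\<rho> \<noteq> 0\<close> in simp)
  qed
  also have "\<dots> = ennreal (q * V) * ennreal (Gamma q)"
    by (subst nn_integral_cmult) (auto simp: Gamma_conv_nn_integral_real[OF q])
  also have "\<dots> = ennreal (pi powr q)"
  proof -
    have G: "Gamma (q + 1) = q * Gamma q"
      by (rule Gamma_plus1) (use q in \<open>auto dest: nonpos_Ints_nonpos\<close>)
    have "Gamma q \<noteq> 0" using Gamma_real_pos[OF q] by simp
    then have "q * V * Gamma q = pi powr q"
      using q unfolding V_def unit_ball_vol_def q_def[symmetric] G by simp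
    then show ?thesis using q V by (simp add: ennreal_mult'[symmetric])
  qed
  finally show ?thesis by (simp add: q_def)
qed

lemma nn_integral_gaussian:
  fixes c :: "'a::euclidean_space"
  assumes A: "A > 0"
  shows "(\<integral>\<^sup>+y. ennreal (exp (- A * norm y ^ 2 + c \<bullet> y)) \<partial>lborel)
     = ennreal (exp (norm c ^ 2 / (4*A)) * (pi / A) powr (DIM('a) / 2))"
proof -
  define m where "m = (1 / (2*A)) *\<^sub>R c"
  have square: "- A * norm y ^ 2 + c \<bullet> y = norm c ^ 2 / (4*A) + (- A * norm (y - m) ^ 2)" for y
    using A unfolding m_def power2_norm_eq_inner
    by (simp add: inner_diff_left inner_diff_right inner_commute algebra_simps power2_eq_square field_simps)
  have rescale: "A * (norm y / sqrt A) ^ 2 = norm y ^ 2" for y :: 'a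
    using A by (simp add: power_mult_distrib power_divide)
  have "(\<integral>\<^sup>+y. ennreal (exp (- A * norm y ^ 2 + c \<bullet> y)) \<partial>lborel)
      = (\<integral>\<^sup>+y. ennreal (exp (norm c ^ 2 / (4*A))) * ennreal (exp (- A * norm (y - m) ^ 2)) \<partial>lborel)"
    by (intro nn_integral_cong) (simp only: square exp_add ennreal_mult exp_ge_zero)
  also have "\<dots> = ennreal (exp (norm c ^ 2 / (4*A))) * (\<integral>\<^sup>+y. ennreal (exp (- A * norm (y - m) ^ 2)) \<partial>lborel)"
    by (rule nn_integral_cmult) measurable
  also have "(\<integral>\<^sup>+y. ennreal (exp (- A * norm (y - m) ^ 2)) \<partial>lborel)
      = ennreal ((1 / sqrt A) ^ DIM('a)) * (\<integral>\<^sup>+y. ennreal (exp (- (norm (y::'a) ^ 2))) \<partial>lborel)"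
    using A by (subst nn_integral_lborel_affine[of _ "1 / sqrt A" m]) (auto simp: rescale)
  also have "(1 / sqrt A) ^ DIM('a) = A powr (- (DIM('a) / 2))"
    using A by (simp add: powr_minus powr_realpow[symmetric] powr_powr sqrt_def root_powr_inverse
        divide_inverse[symmetric] field_simps)
  also have "ennreal (exp (norm c ^ 2 / (4*A))) *
      (ennreal (A powr (- (DIM('a) / 2))) * (\<integral>\<^sup>+y. ennreal (exp (- (norm (y::'a) ^ 2))) \<partial>lborel))
      = ennreal (exp (norm c ^ 2 / (4*A)) * (pi / A) powr (DIM('a) / 2))"
    using A by (simp add: nn_integral_exp_neg_norm_sq ennreal_mult[symmetric] powr_divide powr_minus_divide)
  finally show ?thesis .
qed

section \<open>Gamma, Beta and Kummer integrals\<close>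

lemma nn_integral_Gamma_scaled:
  assumes a: "a > 0" and l: "l > 0"
  shows "(\<integral>\<^sup>+t. indicator {0<..} t * ennreal (t powr (a-1) * exp (-l*t)) \<partial>lborel) = ennreal (Gamma a / l powr a)"
proof -
  let ?f = "\<lambda>t::real. indicator {0<..} t * ennreal (t powr (a-1) * exp (-l*t))"
  have "(\<integral>\<^sup>+t. ?f t \<partial>lborel) = ennreal \<bar>1/l\<bar> * (\<integral>\<^sup>+u. ?f (0 + (1/l) * u) \<partial>lborel)"
    by (rule nn_integral_real_affine) (use l in auto)
  also have "\<dots> = (\<integral>\<^sup>+u. ennreal (1/l) * ?f (u/l) \<partial>lborel)"
    using l by (subst nn_integral_cmult) auto
  also have "\<dots> = (\<integral>\<^sup>+u. ennreal (l powr (-a)) * ennreal (indicator {0..} u * u powr (a - 1) / exp u) \<partial>lborel)"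
  proof (intro nn_integral_cong_AE eventually_mono[OF AE_lborel_singleton[of 0]])
    fix u :: real assume "u \<noteq> 0"
    show "ennreal (1/l) * ?f (u/l) = ennreal (l powr (-a)) * ennreal (indicator {0..} u * u powr (a - 1) / exp u)"
    proof (cases "u > 0")
      case True
      have "1/l * ((u/l) powr (a-1) * exp (-l*(u/l))) = l powr (-a) * (u powr (a - 1) / exp u)"
        using True l by (simp add: powr_divide powr_diff powr_minus exp_minus field_simps)
      then show ?thesis using True l by (simp add: ennreal_mult'[symmetric])
    qed (use \<open>u \<noteq> 0\<close> l in \<open>simp add: indicator_def field_simps\<close>)
  qed
  also have "\<dots> = ennreal (l powr (-a)) * ennreal (Gamma a)"
    by (subst nn_integral_cmult) (auto simp: Gamma_conv_nn_integral_real[OF a])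
  also have "\<dots> = ennreal (Gamma a / l powr a)"
    using a l by (simp add: ennreal_mult'[symmetric] powr_minus field_simps)
  finally show ?thesis .
qed

lemma nn_integral_Beta_second_kind:
  assumes a: "a > 0" and c: "c > a"
  shows "(\<integral>\<^sup>+t. indicator {0<..} t * ennreal (t powr (a-1) * (1+t) powr (-c)) \<partial>lborel)
       = ennreal (Gamma a * Gamma (c - a) / Gamma c)"
proof -
  have c0: "c > 0" using a c by simp
  have Gc: "Gamma c > 0" using c0 by (simp add: Gamma_real_pos)
  let ?k = "\<lambda>t w. ennreal (1 / Gamma c) * (indicator {0<..} t * indicator {0<..} w *
    ennreal (t powr (a-1) * w powr (c-1) * exp (-w) * exp (-t*w)))"
  have "(\<integral>\<^sup>+t. indicator {0<..} t * ennreal (t powr (a-1) * (1+t) powr (-c)) \<partial>lborel)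
      = (\<integral>\<^sup>+t. \<integral>\<^sup>+w. ?k t w \<partial>lborel \<partial>lborel)"
  proof (intro nn_integral_cong)
    fix t :: real
    show "indicator {0<..} t * ennreal (t powr (a-1) * (1+t) powr (-c)) = (\<integral>\<^sup>+w. ?k t w \<partial>lborel)"
    proof (cases "t > 0")
      case True
      have "(\<integral>\<^sup>+w. ?k t w \<partial>lborel) = (\<integral>\<^sup>+w. ennreal (t powr (a-1) / Gamma c) *
          (indicator {0<..} w * ennreal (w powr (c-1) * exp (-(1+t)*w))) \<partial>lborel)"
        using True Gc by (intro nn_integral_cong)
          (simp add: ennreal_mult'[symmetric] indicator_def algebra_simps exp_add[symmetric])
      also have "\<dots> = ennreal (t powr (a-1) / Gamma c) * ennreal (Gamma c / (1+t) powr c)"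
        using True nn_integral_Gamma_scaled[OF c0, of "1+t"] by (subst nn_integral_cmult) auto
      also have "\<dots> = indicator {0<..} t * ennreal (t powr (a-1) * (1+t) powr (-c))"
        using True Gc by (simp add: ennreal_mult'[symmetric] powr_minus field_simps)
      finally show ?thesis by simp
    qed simp
  qed
  also have "\<dots> = (\<integral>\<^sup>+w. \<integral>\<^sup>+t. ?k t w \<partial>lborel \<partial>lborel)"
    by (rule lborel_nn_integral_swap) measurable
  also have "\<dots> = (\<integral>\<^sup>+w. ennreal (Gamma a / Gamma c) *
      (indicator {0<..} w * ennreal (w powr ((c - a) - 1) * exp (-1*w))) \<partial>lborel)"
  proof (intro nn_integral_cong)
    fix w :: real
    show "(\<integral>\<^sup>+t. ?k t w \<partial>lborel)
        = ennreal (Gamma a / Gamma c) * (indicator {0<..} w * ennreal (w powr ((c - a) - 1) * exp (-1*w)))"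
    proof (cases "w > 0")
      case True
      have "(\<integral>\<^sup>+t. ?k t w \<partial>lborel) = (\<integral>\<^sup>+t. ennreal (w powr (c-1) * exp (-w) / Gamma c) *
          (indicator {0<..} t * ennreal (t powr (a-1) * exp (-w*t))) \<partial>lborel)"
        using True Gc by (intro nn_integral_cong) (simp add: ennreal_mult'[symmetric] indicator_def algebra_simps)
      also have "\<dots> = ennreal (w powr (c-1) * exp (-w) / Gamma c) * ennreal (Gamma a / w powr a)"
        using True nn_integral_Gamma_scaled[OF a, of w] by (subst nn_integral_cmult) auto
      also have "\<dots> = ennreal (Gamma a / Gamma c) * (indicator {0<..} w * ennreal (w powr ((c - a) - 1) * exp (-1*w)))"
        using True Gc a by (simp add: ennreal_mult'[symmetric] powr_diff field_simps Gamma_real_pos powr_add)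
      finally show ?thesis .
    qed simp
  qed
  also have "\<dots> = ennreal (Gamma a / Gamma c) * ennreal (Gamma (c - a) / 1 powr (c - a))"
    using nn_integral_Gamma_scaled[of "c - a" 1] a c by (subst nn_integral_cmult) auto
  also have "\<dots> = ennreal (Gamma a * Gamma (c - a) / Gamma c)"
    using Gc a by (simp add: ennreal_mult'[symmetric] Gamma_real_pos)
  finally show ?thesis .
qed

lemma fact_le_pochhammer:
  assumes "b \<ge> (1::real)" shows "pochhammer b n \<ge> fact n"
proof -
  have "fact n = (\<Prod>i\<in>{0..<n}. 1 + real i)" by (simp add: pochhammer_fact pochhammer_prod)
  also have "\<dots> \<le> (\<Prod>i\<in>{0..<n}. b + real i)" using assms by (intro prod_mono) auto
  also have "\<dots> = pochhammer b n" by (simp add: pochhammer_prod)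
  finally show ?thesis .
qed

lemma summable_power_div_pochhammer:
  assumes b: "b \<ge> (1::real)" and x: "x \<ge> 0"
  shows "summable (\<lambda>n. x^n / pochhammer b n)"
proof (rule summable_comparison_test[OF _ summable_exp[of x]])
  show "\<exists>N. \<forall>n\<ge>N. norm (x ^ n / pochhammer b n) \<le> inverse (fact n) * x ^ n"
  proof (intro exI allI impI)
    fix n :: nat
    have p: "pochhammer b n \<ge> fact n" by (rule fact_le_pochhammer[OF b])
    have fp: "(fact n :: real) > 0" by simp
    have pp: "pochhammer b n > 0" using p fp by linarith
    have "norm (x ^ n / pochhammer b n) = x ^ n / pochhammer b n"
      using x pp by (simp add: abs_of_nonneg)
    also have "\<dots> \<le> x ^ n / fact n" using x p fp pp by (intro divide_left_mono) auto
    finally show "norm (x ^ n / pochhammer b n) \<le> inverse (fact n) * x ^ n" by (simp add: field_simps)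
  qed
qed

lemma kummer1F1_1_eq: "kummer1F1 1 b x = (\<Sum>n. x^n / pochhammer b n)"
  unfolding kummer1F1_def by (simp add: pochhammer_fact[symmetric])

lemma nn_integral_Beta_second_kind_pochhammer:
  assumes a: "\<alpha> > 0"
  shows "(\<integral>\<^sup>+t. indicator {0<..} t * ennreal (t powr (\<alpha>-1) * (1+t) powr (-(\<alpha>+1+real m))) \<partial>lborel)
       = ennreal (fact m / pochhammer \<alpha> (Suc m))"
proof -
  have "\<alpha> \<notin> \<int>\<^sub>\<le>\<^sub>0" using a by (auto dest: nonpos_Ints_nonpos)
  then have "pochhammer \<alpha> (Suc m) = Gamma (\<alpha> + 1 + real m) / Gamma \<alpha>"
    by (simp add: pochhammer_Gamma add_ac)
  moreover have "Gamma (\<alpha> + 1 + real m - \<alpha>) = fact m"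
    using Gamma_fact[of m] by (simp add: add.commute)
  moreover have "Gamma \<alpha> > 0" "Gamma (\<alpha> + 1 + real m) > 0"
    using a by (auto intro!: Gamma_real_pos)
  ultimately show ?thesis
    using nn_integral_Beta_second_kind[OF a, of "\<alpha> + 1 + real m"] by simp
qed

lemma kummer1F1_1_nonneg: "b \<ge> 1 \<Longrightarrow> x \<ge> 0 \<Longrightarrow> kummer1F1 1 b x \<ge> 0"
  unfolding kummer1F1_1_eq
  by (intro suminf_nonneg summable_power_div_pochhammer) (auto intro!: divide_nonneg_nonneg pochhammer_nonneg)

lemma nn_integral_kummer1F1:
  assumes a: "\<alpha> > 0" and x: "x \<ge> 0"
  shows "(\<integral>\<^sup>+t. indicator {0<..} t * ennreal (t powr (\<alpha>-1) * (1+t) powr (-(\<alpha>+1)) * exp (x/(1+t))) \<partial>lborel)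
     = ennreal (kummer1F1 1 (\<alpha>+1) x / \<alpha>)"
proof -
  define B where "B m t = indicator {0<..} t * ennreal (t powr (\<alpha>-1) * (1+t) powr (-(\<alpha>+1+real m)))"
    for m t
  have exp_series: "indicator {0<..} t * ennreal (t powr (\<alpha>-1) * (1+t) powr (-(\<alpha>+1)) * exp (x/(1+t)))
      = (\<Sum>m. ennreal (x^m / fact m) * B m t)" for t :: real
  proof (cases "t > 0")
    case True
    define K where "K = t powr (\<alpha>-1) * (1+t) powr (-(\<alpha>+1))"
    have series_term: "K * ((x/(1+t))^m /\<^sub>R fact m) = x^m / fact m * (t powr (\<alpha>-1) * (1+t) powr (-(\<alpha>+1+real m)))"
      for m
    proof -
      have "(1+t) powr (-(\<alpha>+1+real m)) = (1+t) powr (-(\<alpha>+1)) * (1+t) powr (- real m)"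
        by (subst powr_add[symmetric]) (simp add: algebra_simps)
      also have "\<dots> = (1+t) powr (-(\<alpha>+1)) / (1+t)^m"
        using True by (simp add: powr_minus powr_realpow divide_inverse)
      finally show ?thesis using True by (simp add: K_def power_divide field_simps)
    qed
    have sums: "(\<lambda>m. x^m / fact m * (t powr (\<alpha>-1) * (1+t) powr (-(\<alpha>+1+real m)))) sums (K * exp (x/(1+t)))"
      using sums_mult[OF exp_converges[of "x/(1+t)"], of K] by (simp only: series_term)
    have "(\<Sum>m. ennreal (x^m / fact m) * B m t) = (\<Sum>m. ennreal (x^m / fact m * (t powr (\<alpha>-1) * (1+t) powr (-(\<alpha>+1+real m)))))"
      using True x by (intro suminf_cong, subst ennreal_mult') (auto simp: B_def)
    also have "\<dots> = ennreal (K * exp (x/(1+t)))"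
      by (rule suminf_ennreal_eq[OF _ sums]) (use x in simp)
    finally show ?thesis using True by (simp add: K_def)
  qed (simp add: B_def)
  have "(\<integral>\<^sup>+t. indicator {0<..} t * ennreal (t powr (\<alpha>-1) * (1+t) powr (-(\<alpha>+1)) * exp (x/(1+t))) \<partial>lborel)
      = (\<Sum>m. \<integral>\<^sup>+t. ennreal (x^m / fact m) * B m t \<partial>lborel)"
    unfolding exp_series by (rule nn_integral_suminf) (simp add: B_def)
  also have "\<dots> = (\<Sum>m. ennreal (x^m / pochhammer \<alpha> (Suc m)))"
  proof (intro suminf_cong)
    fix m
    have "(\<integral>\<^sup>+t. ennreal (x^m / fact m) * B m t \<partial>lborel) = ennreal (x^m / fact m) * ennreal (fact m / pochhammer \<alpha> (Suc m))"
      unfolding B_def by (subst nn_integral_cmult) (measurable, simp only: nn_integral_Beta_second_kind_pochhammer[OF a])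
    also have "\<dots> = ennreal (x^m / pochhammer \<alpha> (Suc m))"
      using x by (subst ennreal_mult'[symmetric]) auto
    finally show "(\<integral>\<^sup>+t. ennreal (x^m / fact m) * B m t \<partial>lborel) = ennreal (x^m / pochhammer \<alpha> (Suc m))" .
  qed
  also have "\<dots> = (\<Sum>m. ennreal (x^m / pochhammer (\<alpha>+1) m / \<alpha>))"
    by (simp add: pochhammer_rec add.commute[of 1] mult.commute[of \<alpha>])
  also have "\<dots> = ennreal (\<Sum>m. x^m / pochhammer (\<alpha>+1) m / \<alpha>)"
    using a x by (intro suminf_ennreal2 summable_divide summable_power_div_pochhammer)
      (auto intro!: divide_nonneg_nonneg mult_nonneg_nonneg pochhammer_nonneg)
  also have "(\<Sum>m. x^m / pochhammer (\<alpha>+1) m / \<alpha>) = kummer1F1 1 (\<alpha>+1) x / \<alpha>"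
    unfolding kummer1F1_1_eq using a x by (intro suminf_divide summable_power_div_pochhammer) auto
  finally show ?thesis .
qed

section \<open>The uniform measure on a sphere\<close>

lemma finite_measure_sphere_measure: "finite_measure (sphere_measure r :: 'a::euclidean_space measure)"
  unfolding sphere_measure_def
  by (rule finite_measureI) (simp add: emeasure_distr emeasure_ball divide_ennreal)

lemma AE_sphere_measure_norm_le: "AE b in sphere_measure r. norm (b :: 'a::euclidean_space) \<le> \<bar>r\<bar>"
  unfolding sphere_measure_def
  by (subst AE_distr_iff) (auto simp: norm_sgn mult_left_le)

lemma nn_integral_sphere_measure:
  fixes F :: "'a::euclidean_space \<Rightarrow> ennreal"
  assumes [measurable]: "F \<in> borel_measurable borel"
  shows "(\<integral>\<^sup>+b. F b \<partial>sphere_measure r)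
    = ennreal (1 / unit_ball_vol DIM('a)) * (\<integral>\<^sup>+x. indicator (ball 0 1) x * F (r *\<^sub>R sgn x) \<partial>lborel)"
proof -
  have "(\<integral>\<^sup>+b. F b \<partial>sphere_measure r) = (\<integral>\<^sup>+x. F (r *\<^sub>R sgn x) \<partial>uniform_measure lborel (ball (0::'a) 1))"
    unfolding sphere_measure_def by (rule nn_integral_distr) measurable
  also have "\<dots> = (\<integral>\<^sup>+x. F (r *\<^sub>R sgn x) * indicator (ball 0 1) x \<partial>lborel) / ennreal (unit_ball_vol DIM('a))"
    by (subst nn_integral_uniform_measure) (auto simp: emeasure_ball)
  finally show ?thesis
    by (simp add: divide_ennreal_def inverse_ennreal inverse_eq_divide mult_ac)
qed

lemma borel_measurable_nn_integral_sphere_measure[measurable (raw)]: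
  fixes F :: "'b \<Rightarrow> 'a::euclidean_space \<Rightarrow> ennreal"
  assumes [measurable]: "case_prod F \<in> borel_measurable (N \<Otimes>\<^sub>M borel)" "f \<in> borel_measurable N"
  shows "(\<lambda>s. \<integral>\<^sup>+b. F s b \<partial>sphere_measure (f s)) \<in> borel_measurable N"
proof -
  have [measurable]: "F s \<in> borel_measurable borel" if "s \<in> space N" for s
    using that by measurable
  have "(\<lambda>s. ennreal (1 / unit_ball_vol DIM('a)) *
      (\<integral>\<^sup>+x. indicator (ball 0 1) x * F s (f s *\<^sub>R sgn x) \<partial>lborel)) \<in> borel_measurable N"
    by measurable
  then show ?thesis
    by (rule measurable_cong[THEN iffD1, rotated]) (simp add: nn_integral_sphere_measure)
qed

lemma nn_integral_sphere_measure_radial: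
  fixes F :: "'a::euclidean_space \<Rightarrow> ennreal"
  assumes [measurable]: "F \<in> borel_measurable borel" "\<phi> \<in> borel_measurable borel" and r: "r > 0"
  shows "(\<integral>\<^sup>+b. ennreal (\<phi> (norm b)) * F b \<partial>sphere_measure r) = ennreal (\<phi> r) * (\<integral>\<^sup>+b. F b \<partial>sphere_measure r)"
proof -
  have "(\<integral>\<^sup>+x. indicator (ball 0 1) x * (ennreal (\<phi> (norm (r *\<^sub>R sgn x))) * F (r *\<^sub>R sgn x)) \<partial>lborel)
      = (\<integral>\<^sup>+x. ennreal (\<phi> r) * (indicator (ball 0 1) x * F (r *\<^sub>R sgn x)) \<partial>lborel)"
    using r by (intro nn_integral_cong_AE eventually_mono[OF AE_lborel_singleton[of 0]])
      (simp add: norm_sgn ac_simps)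
  then show ?thesis
    by (simp add: nn_integral_sphere_measure nn_integral_cmult ac_simps)
qed

lemma integral_sphere_measure_eq_nn_integral:
  fixes g :: "'a::euclidean_space \<Rightarrow> real"
  assumes [measurable]: "g \<in> borel_measurable borel" and "\<And>b. g b \<ge> 0"
    and bound: "\<And>b. norm b \<le> \<bar>r\<bar> \<Longrightarrow> g b \<le> M"
  shows "ennreal (\<integral>b. g b \<partial>sphere_measure r) = (\<integral>\<^sup>+b. ennreal (g b) \<partial>sphere_measure r)"
proof -
  interpret finite_measure "sphere_measure r :: 'a measure" by (rule finite_measure_sphere_measure)
  have "AE b in sphere_measure r. norm (g b) \<le> M"
    using AE_sphere_measure_norm_le[of r] by eventually_elim (simp add: assms(2) bound)
  moreover have "g \<in> borel_measurable (sphere_measure r)"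
    by (simp add: sphere_measure_def measurable_distr_eq1)
  ultimately have "integrable (sphere_measure r) g"
    by (rule integrable_const_bound)
  then show ?thesis
    by (subst nn_integral_eq_integral) (auto simp: assms(2))
qed

lemma nn_integral_lborel_sphere_polar:
  fixes F :: "'a::euclidean_space \<Rightarrow> ennreal"
  assumes [measurable]: "F \<in> borel_measurable borel"
  shows "(\<integral>\<^sup>+y. F y \<partial>lborel) = (\<integral>\<^sup>+r. indicator {0<..} r *
      ennreal (DIM('a) * unit_ball_vol DIM('a) * r powr (real DIM('a) - 1)) * (\<integral>\<^sup>+b. F b \<partial>sphere_measure r) \<partial>lborel)"
proof -
  have V: "unit_ball_vol DIM('a) \<noteq> 0" by (rule less_imp_neq[symmetric, OF unit_ball_vol_pos]) simp
  have eq: "ennreal (DIM('a) * unit_ball_vol DIM('a) * r powr (real DIM('a) - 1)) * ennreal (1 / unit_ball_vol DIM('a))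
      = ennreal (DIM('a) * r powr (real DIM('a) - 1))" for r :: real
    by (subst ennreal_mult'[symmetric]) (use V in simp_all)
  show ?thesis
    unfolding nn_integral_lborel_polar[OF assms] nn_integral_sphere_measure[OF assms]
    by (intro nn_integral_cong) (simp only: eq[symmetric] ac_simps)
qed

lemma nn_integral_sphere_gaussian_mixture:
  fixes F :: "'a::euclidean_space \<Rightarrow> ennreal" and w :: "real \<Rightarrow> ennreal" and c :: "real \<Rightarrow> real"
  assumes [measurable]: "F \<in> borel_measurable borel" "w \<in> borel_measurable borel" "c \<in> borel_measurable borel"
  shows "(\<integral>\<^sup>+r. indicator {0<..} r * ennreal (r powr (real DIM('a) - 1)) * (\<integral>\<^sup>+b. F b \<partial>sphere_measure r) *
            (\<integral>\<^sup>+t. w t * ennreal (exp (- c t * r\<^sup>2)) \<partial>lborel) \<partial>lborel)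
       = ennreal (1 / (DIM('a) * unit_ball_vol DIM('a))) *
           (\<integral>\<^sup>+t. w t * (\<integral>\<^sup>+y. ennreal (exp (- c t * (norm y)\<^sup>2)) * F y \<partial>lborel) \<partial>lborel)"
    (is "_ = ennreal ?C * _")
proof -
  let ?S = "\<lambda>t r. indicator {0<..} r * ennreal (r powr (real DIM('a) - 1)) *
    (\<integral>\<^sup>+b. ennreal (exp (- c t * (norm b)\<^sup>2)) * F b \<partial>sphere_measure r)"
  have V: "unit_ball_vol DIM('a) \<noteq> 0" by (rule less_imp_neq[symmetric, OF unit_ball_vol_pos]) simp
  have "(\<integral>\<^sup>+r. indicator {0<..} r * ennreal (r powr (real DIM('a) - 1)) * (\<integral>\<^sup>+b. F b \<partial>sphere_measure r) *
            (\<integral>\<^sup>+t. w t * ennreal (exp (- c t * r\<^sup>2)) \<partial>lborel) \<partial>lborel)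
      = (\<integral>\<^sup>+r. \<integral>\<^sup>+t. w t * ?S t r \<partial>lborel \<partial>lborel)"
  proof (intro nn_integral_cong)
    fix r :: real
    let ?A = "indicator {0<..} r * ennreal (r powr (real DIM('a) - 1)) * (\<integral>\<^sup>+b. F b \<partial>sphere_measure r)"
    have radial: "?A * (w t * ennreal (exp (- c t * r\<^sup>2))) = w t * ?S t r" for t
    proof (cases "r > 0")
      case True
      then show ?thesis
        using nn_integral_sphere_measure_radial[of F "\<lambda>\<rho>. exp (- c t * \<rho>\<^sup>2)" r] by (simp add: ac_simps)
    qed simp
    have "?A * (\<integral>\<^sup>+t. w t * ennreal (exp (- c t * r\<^sup>2)) \<partial>lborel)
        = (\<integral>\<^sup>+t. ?A * (w t * ennreal (exp (- c t * r\<^sup>2))) \<partial>lborel)"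
      by (rule nn_integral_cmult[symmetric]) measurable
    then show "?A * (\<integral>\<^sup>+t. w t * ennreal (exp (- c t * r\<^sup>2)) \<partial>lborel) = (\<integral>\<^sup>+t. w t * ?S t r \<partial>lborel)"
      by (simp only: radial)
  qed
  also have "\<dots> = (\<integral>\<^sup>+t. w t * (\<integral>\<^sup>+r. ?S t r \<partial>lborel) \<partial>lborel)"
    by (subst lborel_nn_integral_swap) (measurable, intro nn_integral_cong nn_integral_cmult, measurable)
  also have "\<dots> = (\<integral>\<^sup>+t. w t * (ennreal ?C * (\<integral>\<^sup>+y. ennreal (exp (- c t * (norm y)\<^sup>2)) * F y \<partial>lborel)) \<partial>lborel)"
  proof (intro nn_integral_cong arg_cong2[where f = "(*)"] refl)
    fix t :: real
    have "ennreal ?C * ennreal (DIM('a) * unit_ball_vol DIM('a) * r powr (real DIM('a) - 1))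
        = ennreal (r powr (real DIM('a) - 1))" for r :: real
      by (subst ennreal_mult'[symmetric]) (use V in simp_all)
    note eq = this
    let ?G = "\<lambda>y. ennreal (exp (- c t * (norm y)\<^sup>2)) * F y"
    have "ennreal ?C * (\<integral>\<^sup>+y. ?G y \<partial>lborel) = ennreal ?C * (\<integral>\<^sup>+r. indicator {0<..} r *
      ennreal (DIM('a) * unit_ball_vol DIM('a) * r powr (real DIM('a) - 1)) * (\<integral>\<^sup>+b. ?G b \<partial>sphere_measure r) \<partial>lborel)"
      by (rule arg_cong[where f = "\<lambda>x. ennreal ?C * x"], rule nn_integral_lborel_sphere_polar) measurable
    also have "\<dots> = (\<integral>\<^sup>+r. ennreal ?C * (indicator {0<..} r *
      ennreal (DIM('a) * unit_ball_vol DIM('a) * r powr (real DIM('a) - 1)) * (\<integral>\<^sup>+b. ?G b \<partial>sphere_measure r)) \<partial>lborel)"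
      by (rule nn_integral_cmult[symmetric]) measurable
    also have "\<dots> = (\<integral>\<^sup>+r. ?S t r \<partial>lborel)"
      by (intro nn_integral_cong) (simp only: eq[symmetric] ac_simps)
    finally show "(\<integral>\<^sup>+r. ?S t r \<partial>lborel) = ennreal ?C * (\<integral>\<^sup>+y. ?G y \<partial>lborel)" ..
  qed
  finally show ?thesis
    by (subst nn_integral_cmult[symmetric], measurable) (simp only: ac_simps)
qed

section \<open>Tricomi's function and the prior\<close>

lemma borel_measurable_tricomiU[measurable]: "(\<lambda>s. tricomiU \<alpha> b s) \<in> borel_measurable borel"
  unfolding tricomiU_def set_lebesgue_integral_def by measurable

lemma tricomiU_Gamma_eq_nn_integral:
  assumes a: "\<alpha> > 0" and s: "s > 0" and b: "b \<le> \<alpha> + 1"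
  shows "ennreal (tricomiU \<alpha> b s * Gamma \<alpha>) =
    (\<integral>\<^sup>+t. indicator {0<..} t * ennreal (t powr (\<alpha>-1) * (1+t) powr (b-\<alpha>-1) * exp (-s*t)) \<partial>lborel)"
    (is "_ = ?J")
proof -
  have "tricomiU \<alpha> b s * Gamma \<alpha> = (LBINT t:{0<..}. exp (- s * t) * t powr (\<alpha> - 1) * (1 + t) powr (b - \<alpha> - 1))"
    using Gamma_real_pos[OF a] by (simp add: tricomiU_def)
  also have "\<dots> = enn2real ?J"
    unfolding set_lebesgue_integral_def
    by (subst integral_eq_nn_integral) (auto intro!: arg_cong[where f = enn2real] nn_integral_cong
        simp: indicator_def ac_simps)
  finally have U: "tricomiU \<alpha> b s * Gamma \<alpha> = enn2real ?J" .
  have "?J \<le> (\<integral>\<^sup>+t. indicator {0<..} t * ennreal (t powr (\<alpha>-1) * exp (-s*t)) \<partial>lborel)"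
  proof (intro nn_integral_mono)
    fix t :: real
    show "indicator {0<..} t * ennreal (t powr (\<alpha>-1) * (1+t) powr (b-\<alpha>-1) * exp (-s*t))
        \<le> indicator {0<..} t * ennreal (t powr (\<alpha>-1) * exp (-s*t))"
    proof (cases "t > 0")
      case True
      then have "(1+t) powr (b-\<alpha>-1) \<le> 1" using powr_mono[of "b-\<alpha>-1" 0 "1+t"] b by simp
      from mult_left_le[OF this, of "t powr (\<alpha>-1) * exp (-s*t)"]
      have "t powr (\<alpha>-1) * (1+t) powr (b-\<alpha>-1) * exp (-s*t) \<le> t powr (\<alpha>-1) * exp (-s*t)"
        by (simp add: ac_simps)
      then show ?thesis using True by (simp add: ennreal_leI)
    qed simp
  qed
  also have "\<dots> = ennreal (Gamma \<alpha> / s powr \<alpha>)" by (rule nn_integral_Gamma_scaled[OF a s])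
  finally have "?J < top" by (simp add: le_less_trans)
  then show ?thesis unfolding U by simp
qed

lemma tricomiU_nonneg: "\<alpha> > 0 \<Longrightarrow> tricomiU \<alpha> b s \<ge> 0"
  unfolding tricomiU_def set_lebesgue_integral_def
  by (intro divide_nonneg_nonneg integral_nonneg) (auto simp: indicator_def Gamma_real_pos less_imp_le)

lemma pg'_eq_tricomiU_Gamma:
  fixes K N :: nat and a r :: real
  assumes r: "r > 0"
  defines "\<alpha> \<equiv> (a + K - 2) / 2"
  shows "pg' a K N r = (a - 2) / Gamma (K / 2) * ((N / 2) powr (K / 2) * r powr (real K - 1)) *
      (tricomiU \<alpha> (K / 2) (N * r\<^sup>2 / 2) * Gamma \<alpha>)"
proof -
  have "(r\<^sup>2) powr (K / 2) = (r powr 2) powr (K / 2)"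
    using r by (simp add: powr_realpow)
  also have "\<dots> = r powr K" by (simp add: powr_powr)
  finally have r2: "(r\<^sup>2) powr (K / 2) = r powr K" .
  have "(N * r\<^sup>2 / 2) powr (K / 2) = ((N / 2) * r\<^sup>2) powr (K / 2)" by (simp add: mult_ac)
  also have "\<dots> = (N / 2) powr (K / 2) * r powr K" by (subst powr_mult) (simp_all add: r2)
  finally have pw: "(N * r\<^sup>2 / 2) powr (K / 2) / r = (N / 2) powr (K / 2) * r powr (real K - 1)"
    using r by (simp add: powr_diff)
  have \<alpha>_eq: "(a + K) / 2 - 1 = \<alpha>" "(a + K - 2) / 2 = \<alpha>" by (simp_all add: \<alpha>_def field_simps)
  show ?thesis
    unfolding pg'_def pw[symmetric] \<alpha>_eq by (simp only: divide_inverse ac_simps)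
qed

(* The Tricomi integral read backwards: the prior is a mixture over t of radial Gaussian factors
   exp (- N t r^2 / 2). *)
lemma pg'_eq_nn_integral:
  fixes K N :: nat and a r :: real
  assumes a: "a > 2" and K: "K > 0" and N: "N > 0" and r: "r > 0"
  shows "ennreal (pg' a K N r) = ennreal ((a - 2) / Gamma (K / 2) * (N / 2) powr (K / 2)) *
    (ennreal (r powr (real K - 1)) * (\<integral>\<^sup>+t. indicator {0<..} t *
      ennreal (t powr ((a + K) / 2 - 2) * (1 + t) powr (- a / 2)) * ennreal (exp (- (N * t / 2) * r\<^sup>2)) \<partial>lborel))"
proof -
  define \<alpha> where "\<alpha> = (a + K - 2) / 2"
  have \<alpha>: "\<alpha> > 0" using a by (simp add: \<alpha>_def)
  have P: "(a - 2) / Gamma (K / 2) * (N / 2) powr (K / 2) \<ge> 0"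
    using a K by (simp add: Gamma_real_pos)
  have "ennreal (pg' a K N r) = ennreal ((a - 2) / Gamma (K / 2) * (N / 2) powr (K / 2)) *
      (ennreal (r powr (real K - 1)) * ennreal (tricomiU \<alpha> (K / 2) (N * r\<^sup>2 / 2) * Gamma \<alpha>))"
    using P unfolding pg'_eq_tricomiU_Gamma[OF r] \<alpha>_def by (simp add: ennreal_mult'[symmetric] mult.assoc)
  also have "ennreal (tricomiU \<alpha> (K / 2) (N * r\<^sup>2 / 2) * Gamma \<alpha>) = (\<integral>\<^sup>+t. indicator {0<..} t *
      ennreal (t powr ((a + K) / 2 - 2) * (1 + t) powr (- a / 2)) * ennreal (exp (- (N * t / 2) * r\<^sup>2)) \<partial>lborel)"
  proof -
    have "N * r\<^sup>2 / 2 > 0" "K / 2 \<le> \<alpha> + 1" using N r a by (simp_all add: \<alpha>_def field_simps)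
    note U = tricomiU_Gamma_eq_nn_integral[OF \<alpha> this]
    have "\<alpha> - 1 = (a + K) / 2 - 2" "K / 2 - \<alpha> - 1 = - a / 2" by (simp_all add: \<alpha>_def field_simps)
    moreover have "- (N * r\<^sup>2 / 2) * t = - (N * t / 2) * r\<^sup>2" for t :: real by simp
    ultimately have "t powr (\<alpha> - 1) * (1 + t) powr (K / 2 - \<alpha> - 1) * exp (- (N * r\<^sup>2 / 2) * t)
        = t powr ((a + K) / 2 - 2) * (1 + t) powr (- a / 2) * exp (- (N * t / 2) * r\<^sup>2)" for t :: real
      by (simp only:)
    then show ?thesis
      unfolding U by (intro nn_integral_cong) (simp only: ennreal_mult''[OF exp_ge_zero] mult.assoc[where 'a = ennreal])
  qed
  finally show ?thesis .
qed

section \<open>The marginal likelihood\<close>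

lemma nn_integral_gaussian_posterior:
  fixes \<beta> :: "'a::euclidean_space" and N :: nat and t C0 :: real
  assumes N: "N > 0" and t: "t > -1" and C0: "C0 \<ge> 0"
  shows "(\<integral>\<^sup>+y. ennreal (exp (- (N * t / 2) * (norm y)\<^sup>2)) * ennreal (C0 * exp (- (N / 2) * (norm y)\<^sup>2 + N * (\<beta> \<bullet> y))) \<partial>lborel)
    = ennreal (C0 * (2 * pi / N) powr (DIM('a) / 2) * ((1 + t) powr (- (DIM('a) / 2)) * exp (N * (norm \<beta>)\<^sup>2 / 2 / (1 + t))))"
proof -
  have t1: "1 + t > 0" using t by simp
  then have A: "N * (1 + t) / 2 > 0" using N by simp
  have "(\<integral>\<^sup>+y. ennreal (exp (- (N * t / 2) * (norm y)\<^sup>2)) * ennreal (C0 * exp (- (N / 2) * (norm y)\<^sup>2 + N * (\<beta> \<bullet> y))) \<partial>lborel)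
      = (\<integral>\<^sup>+y. ennreal C0 * ennreal (exp (- (N * (1 + t) / 2) * (norm y)\<^sup>2 + (N *\<^sub>R \<beta>) \<bullet> y)) \<partial>lborel)"
    using C0 by (intro nn_integral_cong) (simp add: ennreal_mult'[symmetric] exp_add[symmetric] algebra_simps)
  also have "\<dots> = ennreal C0 * ennreal (exp ((norm (N *\<^sub>R \<beta>))\<^sup>2 / (4 * (N * (1 + t) / 2))) * (pi / (N * (1 + t) / 2)) powr (DIM('a) / 2))"
    by (subst nn_integral_cmult, measurable) (subst nn_integral_gaussian[OF A], rule refl)
  also have "\<dots> = ennreal (C0 * (2 * pi / N) powr (DIM('a) / 2) * ((1 + t) powr (- (DIM('a) / 2)) * exp (N * (norm \<beta>)\<^sup>2 / 2 / (1 + t))))"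
  proof -
    have "pi / (N * (1 + t) / 2) = (2 * pi / N) / (1 + t)" using N t by (simp add: field_simps)
    then have "(pi / (N * (1 + t) / 2)) powr (DIM('a) / 2) = (2 * pi / N) powr (DIM('a) / 2) * (1 + t) powr (- (DIM('a) / 2))"
      using t by (simp only:, subst powr_divide) (simp_all add: powr_minus_divide)
    moreover have "(norm (N *\<^sub>R \<beta>))\<^sup>2 / (4 * (N * (1 + t) / 2)) = N * (norm \<beta>)\<^sup>2 / 2 / (1 + t)"
      using N t1 by (simp add: power_mult_distrib power2_eq_square divide_simps)
    ultimately show ?thesis using C0 by (simp add: ennreal_mult'[symmetric] ac_simps)
  qed
  finally show ?thesis .
qed

lemma likelihood_prior_constants:
  fixes N :: nat and K a C0 F :: real
  assumes K: "K > 0" and N: "N > 0" and a: "a > 2"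
  shows "(a - 2) / Gamma (K / 2) * (N / 2) powr (K / 2) * (1 / (K * unit_ball_vol K))
      * (C0 * (2 * pi / N) powr (K / 2)) * (F / ((a + K - 2) / 2)) = C0 * ((a - 2) / (K + a - 2)) * F"
proof -
  have G: "Gamma (K / 2 + 1) = K / 2 * Gamma (K / 2)"
    by (rule Gamma_plus1) (use K in \<open>auto dest: nonpos_Ints_nonpos\<close>)
  have \<Gamma>: "Gamma (K / 2) > 0" using K by (simp add: Gamma_real_pos)
  have KV: "K * unit_ball_vol K = 2 * pi powr (K / 2) / Gamma (K / 2)"
    using K \<Gamma> unfolding unit_ball_vol_def G by (simp add: field_simps)
  have NK: "(N / 2) powr (K / 2) * (2 * pi / N) powr (K / 2) = pi powr (K / 2)"
    using N by (simp add: powr_mult[symmetric])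
  have "(a - 2) / Gamma (K / 2) * (N / 2) powr (K / 2) * (1 / (K * unit_ball_vol K)) * (C0 * (2 * pi / N) powr (K / 2))
      = (a - 2) / Gamma (K / 2) * C0 * ((N / 2) powr (K / 2) * (2 * pi / N) powr (K / 2)) / (K * unit_ball_vol K)"
    by (simp only: divide_inverse mult_1_left ac_simps)
  also have "\<dots> = C0 * (a - 2) / 2"
    unfolding NK KV using \<Gamma> by (simp add: field_simps)
  finally have const: "(a - 2) / Gamma (K / 2) * (N / 2) powr (K / 2) * (1 / (K * unit_ball_vol K))
      * (C0 * (2 * pi / N) powr (K / 2)) = C0 * (a - 2) / 2" .
  have "a + K - 2 \<noteq> 0" using K a by simp
  then show ?thesis unfolding const by (simp add: field_simps)
qed

lemma nn_integral_sphere_likelihood_prior: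
  fixes \<beta> :: "'a::euclidean_space" and N :: nat and a C0 :: real
  assumes a: "a > 2" and N: "N > 0" and C0: "C0 \<ge> 0"
  defines "g \<equiv> \<lambda>b. C0 * exp (- (N / 2) * (norm b)\<^sup>2 + N * (\<beta> \<bullet> b))"
  shows "(\<integral>\<^sup>+r. indicator {0<..} r * (\<integral>\<^sup>+b. ennreal (g b) \<partial>sphere_measure r) * ennreal (pg' a DIM('a) N r) \<partial>lborel)
    = ennreal (C0 * ((a - 2) / (DIM('a) + a - 2)) * kummer1F1 1 ((DIM('a) + a) / 2) (N * (norm \<beta>)\<^sup>2 / 2))"
proof -
  define K where "K = real DIM('a)"
  define \<alpha> where "\<alpha> = (a + K - 2) / 2"
  define P where "P = (a - 2) / Gamma (K / 2) * (N / 2) powr (K / 2)"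
  define C where "C = C0 * (2 * pi / N) powr (K / 2)"
  define x0 where "x0 = N * (norm \<beta>)\<^sup>2 / 2"
  define w where "w t = indicator {0<..} t * ennreal (t powr ((a + K) / 2 - 2) * (1 + t) powr (- a / 2))" for t
  have \<alpha>: "\<alpha> > 0" using a by (simp add: \<alpha>_def K_def)
  have [measurable]: "g \<in> borel_measurable borel" unfolding g_def by measurable
  have "(\<integral>\<^sup>+r. indicator {0<..} r * (\<integral>\<^sup>+b. ennreal (g b) \<partial>sphere_measure r) * ennreal (pg' a DIM('a) N r) \<partial>lborel)
      = ennreal P * (\<integral>\<^sup>+r. indicator {0<..} r * ennreal (r powr (K - 1)) * (\<integral>\<^sup>+b. ennreal (g b) \<partial>sphere_measure r) *
          (\<integral>\<^sup>+t. w t * ennreal (exp (- (N * t / 2) * r\<^sup>2)) \<partial>lborel) \<partial>lborel)"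
    unfolding K_def w_def P_def
    by (subst nn_integral_cmult[symmetric], measurable, intro nn_integral_cong)
       (auto simp: pg'_eq_nn_integral[OF a _ N] ac_simps indicator_def)
  also have "\<dots> = ennreal P * (ennreal (1 / (K * unit_ball_vol K)) *
      (\<integral>\<^sup>+t. w t * (\<integral>\<^sup>+y. ennreal (exp (- (N * t / 2) * (norm y)\<^sup>2)) * ennreal (g y) \<partial>lborel) \<partial>lborel))"
    unfolding K_def w_def by (subst nn_integral_sphere_gaussian_mixture) simp_all
  also have "(\<integral>\<^sup>+t. w t * (\<integral>\<^sup>+y. ennreal (exp (- (N * t / 2) * (norm y)\<^sup>2)) * ennreal (g y) \<partial>lborel) \<partial>lborel)
      = (\<integral>\<^sup>+t. ennreal C * (indicator {0<..} t * ennreal (t powr (\<alpha> - 1) * (1 + t) powr (- (\<alpha> + 1)) * exp (x0 / (1 + t)))) \<partial>lborel)"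
  proof (intro nn_integral_cong)
    fix t :: real
    show "w t * (\<integral>\<^sup>+y. ennreal (exp (- (N * t / 2) * (norm y)\<^sup>2)) * ennreal (g y) \<partial>lborel)
        = ennreal C * (indicator {0<..} t * ennreal (t powr (\<alpha> - 1) * (1 + t) powr (- (\<alpha> + 1)) * exp (x0 / (1 + t))))"
    proof (cases "t > 0")
      case True
      have "- a / 2 + - (K / 2) = - (\<alpha> + 1)" by (simp add: \<alpha>_def field_simps)
      then have e1: "(1 + t) powr (- a / 2) * (1 + t) powr (- (K / 2)) = (1 + t) powr (- (\<alpha> + 1))"
        by (simp only: powr_add[symmetric])
      have e2: "(a + K) / 2 - 2 = \<alpha> - 1" by (simp add: \<alpha>_def field_simps)
      have "t powr ((a + K) / 2 - 2) * (1 + t) powr (- a / 2) * (C * ((1 + t) powr (- (K / 2)) * exp (x0 / (1 + t))))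
          = C * (t powr (\<alpha> - 1) * (1 + t) powr (- (\<alpha> + 1)) * exp (x0 / (1 + t)))"
        unfolding e1[symmetric] e2 by (simp only: ac_simps)
      moreover have "C \<ge> 0" using C0 by (simp add: C_def)
      ultimately show ?thesis
        using True unfolding w_def g_def
        by (subst nn_integral_gaussian_posterior[OF N _ C0])
           (simp_all add: C_def x0_def K_def ennreal_mult'[symmetric])
    qed (simp add: w_def)
  qed
  also have "\<dots> = ennreal C * ennreal (kummer1F1 1 (\<alpha> + 1) x0 / \<alpha>)"
    using nn_integral_kummer1F1[OF \<alpha>, of x0] by (subst nn_integral_cmult) (simp_all add: x0_def)
  also have "ennreal P * (ennreal (1 / (K * unit_ball_vol K)) * (ennreal C * ennreal (kummer1F1 1 (\<alpha> + 1) x0 / \<alpha>)))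
      = ennreal (C0 * ((a - 2) / (K + a - 2)) * kummer1F1 1 ((K + a) / 2) x0)"
  proof -
    have K: "K > 0" by (simp add: K_def)
    have "\<alpha> + 1 = (K + a) / 2" by (simp add: \<alpha>_def field_simps)
    moreover have "P * (1 / (K * unit_ball_vol K)) * C * (F / \<alpha>) = C0 * ((a - 2) / (K + a - 2)) * F" for F
      using likelihood_prior_constants[OF K N a, of C0 F] unfolding P_def C_def \<alpha>_def .
    moreover have "P \<ge> 0" "C \<ge> 0" "1 / (K * unit_ball_vol K) \<ge> 0"
      using a C0 K by (simp_all add: P_def C_def K_def Gamma_real_pos)
    ultimately show ?thesis by (simp only: ennreal_mult'[symmetric] mult.assoc)
  qed
  finally show ?thesis by (simp add: K_def x0_def)
qed

lemma set_integral_sphere_likelihood_prior: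
  fixes \<beta> :: "'a::euclidean_space" and N :: nat and a C0 :: real
  assumes a: "a > 2" and N: "N > 0" and C0: "C0 \<ge> 0"
  shows "(LBINT r:{0<..}. (\<integral>b. C0 * exp (- (N / 2) * (norm b)\<^sup>2 + N * (\<beta> \<bullet> b)) \<partial>sphere_measure r) * pg' a DIM('a) N r)
    = C0 * ((a - 2) / (DIM('a) + a - 2)) * kummer1F1 1 ((DIM('a) + a) / 2) (N * (norm \<beta>)\<^sup>2 / 2)"
proof -
  define g where "g b = C0 * exp (- (N / 2) * (norm b)\<^sup>2 + N * (\<beta> \<bullet> b))" for b :: 'a
  have [measurable]: "g \<in> borel_measurable borel" unfolding g_def by measurable
  have g0: "g b \<ge> 0" for b using C0 by (simp add: g_def)
  have g_bound: "g b \<le> C0 * exp (N * (norm \<beta> * \<bar>r\<bar>))" if "norm b \<le> \<bar>r\<bar>" for b r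
  proof -
    have "\<beta> \<bullet> b \<le> norm \<beta> * \<bar>r\<bar>"
      using norm_cauchy_schwarz[of \<beta> b] mult_left_mono[OF that norm_ge_zero[of \<beta>]] by linarith
    then have "N * (\<beta> \<bullet> b) \<le> N * (norm \<beta> * \<bar>r\<bar>)" by (rule mult_left_mono) simp
    moreover have "- (N / 2) * (norm b)\<^sup>2 \<le> 0" by simp
    ultimately have "- (N / 2) * (norm b)\<^sup>2 + N * (\<beta> \<bullet> b) \<le> N * (norm \<beta> * \<bar>r\<bar>)" by linarith
    then show ?thesis unfolding g_def using C0 by (intro mult_left_mono) auto
  qed
  have sphere_nn: "ennreal (\<integral>b. g b \<partial>sphere_measure r) = (\<integral>\<^sup>+b. ennreal (g b) \<partial>sphere_measure r)" for r
    by (rule integral_sphere_measure_eq_nn_integral[OF _ g0 g_bound]) measurable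
  then have sphere_eq: "(\<integral>b. g b \<partial>sphere_measure r) = enn2real (\<integral>\<^sup>+b. ennreal (g b) \<partial>sphere_measure r)" for r
    by (metis enn2real_ennreal integral_nonneg_AE AE_I2 g0)
  have pg'0: "pg' a DIM('a) N r \<ge> 0" if "r > 0" for r
    using that a unfolding pg'_def
    by (intro mult_nonneg_nonneg divide_nonneg_nonneg tricomiU_nonneg) (auto simp: Gamma_real_pos)
  have "(\<lambda>r. indicator {0<..} r *\<^sub>R ((\<integral>b. g b \<partial>sphere_measure r) * pg' a DIM('a) N r)) \<in> borel_measurable lborel"
    unfolding sphere_eq pg'_def by measurable
  moreover have "AE r in lborel. 0 \<le> indicator {0<..} r *\<^sub>R ((\<integral>b. g b \<partial>sphere_measure r) * pg' a DIM('a) N r)"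
    by (intro AE_I2) (simp add: indicator_def integral_nonneg_AE g0 pg'0)
  ultimately have "(LBINT r:{0<..}. (\<integral>b. g b \<partial>sphere_measure r) * pg' a DIM('a) N r)
      = enn2real (\<integral>\<^sup>+r. ennreal (indicator {0<..} r *\<^sub>R ((\<integral>b. g b \<partial>sphere_measure r) * pg' a DIM('a) N r)) \<partial>lborel)"
    unfolding set_lebesgue_integral_def by (rule integral_eq_nn_integral)
  also have "(\<integral>\<^sup>+r. ennreal (indicator {0<..} r *\<^sub>R ((\<integral>b. g b \<partial>sphere_measure r) * pg' a DIM('a) N r)) \<partial>lborel)
      = (\<integral>\<^sup>+r. indicator {0<..} r * (\<integral>\<^sup>+b. ennreal (g b) \<partial>sphere_measure r) * ennreal (pg' a DIM('a) N r) \<partial>lborel)"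
    by (intro nn_integral_cong)
       (simp add: indicator_def ennreal_mult' integral_nonneg_AE g0 sphere_nn[symmetric])
  also have "\<dots> = ennreal (C0 * ((a - 2) / (DIM('a) + a - 2)) * kummer1F1 1 ((DIM('a) + a) / 2) (N * (norm \<beta>)\<^sup>2 / 2))"
    unfolding g_def by (rule nn_integral_sphere_likelihood_prior[OF a N C0])
  finally show ?thesis
    using a C0 kummer1F1_1_nonneg[of "(DIM('a) + a) / 2" "N * (norm \<beta>)\<^sup>2 / 2"]
    by (simp add: g_def)
qed

theorem mainTheorem12:
  fixes \<sigma> y :: "real^'n" and Xr :: "real^'k^'n"
    and S :: "real^'k^'k" and l :: "real^'k" and a :: real
  assumes "a > 2"
    and "\<forall>n. \<sigma> $ n > 0"
    and "rank (scaledX \<sigma> Xr) = CARD('k)"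
    and "orthogonal_matrix S"
    and "Hmat \<sigma> Xr = S ** diagm l ** transpose S"
  shows "(LBINT r:{0<..}. lik_r \<sigma> y Xr S l r * pg' a CARD('k) CARD('n) r) =
    Csigma \<sigma> * exp (- real CARD('n) * zsq_mean \<sigma> y / 2)
      * ((a - 2) / (real CARD('k) + a - 2))
      * kummer1F1 1 ((real CARD('k) + a) / 2)
          (real CARD('n) * (norm (bhat \<sigma> y Xr S l))\<^sup>2 / 2)"
proof -
  define C0 where "C0 = Csigma \<sigma> * exp (- real CARD('n) * zsq_mean \<sigma> y / 2)"
  have "C0 \<ge> 0" unfolding C0_def Csigma_def by (intro mult_nonneg_nonneg prod_nonneg) auto
  have "lik \<sigma> y Xr S l b = C0 * exp (- (CARD('n) / 2) * (norm b)\<^sup>2 + CARD('n) * (bhat \<sigma> y Xr S l \<bullet> b))"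
    for b :: "real^'k"
    unfolding lik_def C0_def by (simp add: mult.assoc exp_add[symmetric] algebra_simps)
  then show ?thesis
    using set_integral_sphere_likelihood_prior[OF \<open>a > 2\<close> zero_less_card_finite \<open>C0 \<ge> 0\<close>, of "bhat \<sigma> y Xr S l"]
    by (simp add: lik_r_def C0_def)
qed

end
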